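(* Let $X$ be a complex Hilbert space, $T\in\mathbb Z^+$, and $\mathcal A$ a bounded linear operator on $X^T$. \begin{enumerate} \item The harmonic resolvent set $\rho_T(\mathcal A)$ is open and contains a neighbourhood of the origin; in particular it is nonempty. \item If $\mathcal A=\mathcal T_T(A)$ for some $T$-periodic sequence $(A_t)_{t\in\mathbb Z}$ of bounded linear operators on $X$, then $e^{2\pi j/T}\rho_T(\mathcal A)=\rho_T(\mathcal A)$. \end{enumerate}
   Context: $j$ denotes the imaginary unit. $\mathcal N_T:=\mathrm{diag}(\epsilon^kI_X)_{k=0}^{T-1}$ on $X^T$ with $\epsilon:=e^{2\pi j/T}$. The harmonic resolvent set is $\rho_T(\mathcal A):=\{z\in\mathbb C: \mathcal N_T-z\mathcal A \text{ has a bounded inverse}\}$. For a $T$-periodic sequence $A_t$ of bounded operators on $X$, its Fourier coefficients are $\widehat A_k:=\frac1T\sum_{t=0}^{T-1}A_te^{-2\pi jtk/T}$ (so $A_t=\sum_{k=0}^{T-1}\widehat A_ke^{2\pi jtk/T}$), and its Toeplitz transform $\mathcal T_T(A)$ is the $T\times T$ block operator matrix on $X^T$ whose entry in row $r$ and column $\ell$ ($0\le r,\ell<T$) is $\widehat A_{(r-\ell)\bmod T}$. *)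

theory Defs
  imports "HOL-Analysis.Analysis"
begin

class complex_vector = real_vector +
  fixes scaleC :: "complex \<Rightarrow> 'a \<Rightarrow> 'a" (infixr "*\<^sub>C" 75)
  assumes scaleC_add_right: "a *\<^sub>C (x + y) = a *\<^sub>C x + a *\<^sub>C y"
    and scaleC_add_left: "(a + b) *\<^sub>C x = a *\<^sub>C x + b *\<^sub>C x"
    and scaleC_scaleC: "a *\<^sub>C (b *\<^sub>C x) = (a * b) *\<^sub>C x"
    and scaleC_one: "1 *\<^sub>C x = x"
    and scaleR_scaleC: "scaleR r x = complex_of_real r *\<^sub>C x"

class complex_normed_vector = complex_vector + real_normed_vector +
  assumes norm_scaleC: "norm (a *\<^sub>C x) = cmod a * norm x"

class complex_inner = complex_normed_vector +
  fixes cinner :: "'a \<Rightarrow> 'a \<Rightarrow> complex"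
  assumes cinner_commute: "cinner x y = cnj (cinner y x)"
    and cinner_add_left: "cinner (x + y) z = cinner x z + cinner y z"
    and cinner_scaleC_left: "cinner (a *\<^sub>C x) y = cnj a * cinner x y"
    and cinner_nonneg: "0 \<le> Re (cinner x x)"
    and cinner_eq_zero_iff: "cinner x x = 0 \<longleftrightarrow> x = 0"
    and norm_eq_sqrt_cinner: "norm x = sqrt (Re (cinner x x))"

class chilbert_space = complex_inner + complete_space

definition clinear :: "('a::complex_vector \<Rightarrow> 'b::complex_vector) \<Rightarrow> bool" where
  "clinear f \<longleftrightarrow> (\<forall>x y. f (x + y) = f x + f y) \<and> (\<forall>c x. f (c *\<^sub>C x) = c *\<^sub>C f x)"

definition bounded_clinear :: "('a::complex_normed_vector \<Rightarrow> 'b::complex_normed_vector) \<Rightarrow> bool" where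
  "bounded_clinear f \<longleftrightarrow> clinear f \<and> (\<exists>K. \<forall>x. norm (f x) \<le> norm x * K)"

text \<open>Elements of X^T are represented as sequences nat \<Rightarrow> 'a vanishing at indices \<ge> T;
  component k (for k < T) is the k-th entry. The norm is the Hilbert-space norm on X^T.\<close>

definition XT :: "nat \<Rightarrow> (nat \<Rightarrow> 'a::zero) set" where
  "XT T = {x. \<forall>k\<ge>T. x k = 0}"

definition XT_norm :: "nat \<Rightarrow> (nat \<Rightarrow> 'a::real_normed_vector) \<Rightarrow> real" where
  "XT_norm T x = sqrt (\<Sum>k<T. (norm (x k))\<^sup>2)"

definition bounded_op_XT :: "nat \<Rightarrow> ((nat \<Rightarrow> 'a::complex_normed_vector) \<Rightarrow> (nat \<Rightarrow> 'a)) \<Rightarrow> bool" where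
  "bounded_op_XT T A \<longleftrightarrow>
     (\<forall>x\<in>XT T. A x \<in> XT T) \<and>
     (\<forall>x\<in>XT T. \<forall>y\<in>XT T. A (\<lambda>k. x k + y k) = (\<lambda>k. A x k + A y k)) \<and>
     (\<forall>c. \<forall>x\<in>XT T. A (\<lambda>k. c *\<^sub>C x k) = (\<lambda>k. c *\<^sub>C A x k)) \<and>
     (\<exists>C. \<forall>x\<in>XT T. XT_norm T (A x) \<le> C * XT_norm T x)"

definition eps :: "nat \<Rightarrow> complex" where
  "eps T = cis (2 * pi / real T)"

definition N_op :: "nat \<Rightarrow> (nat \<Rightarrow> 'a::complex_vector) \<Rightarrow> (nat \<Rightarrow> 'a)" where
  "N_op T x = (\<lambda>k. if k < T then (eps T ^ k) *\<^sub>C x k else 0)"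

definition harmonic_resolvent :: "nat \<Rightarrow> ((nat \<Rightarrow> 'a::complex_normed_vector) \<Rightarrow> (nat \<Rightarrow> 'a)) \<Rightarrow> complex set" where
  "harmonic_resolvent T A =
     {z. \<exists>B. bounded_op_XT T B \<and>
          (\<forall>x\<in>XT T. B (\<lambda>k. N_op T x k - z *\<^sub>C A x k) = x) \<and>
          (\<forall>x\<in>XT T. (\<lambda>k. N_op T (B x) k - z *\<^sub>C A (B x) k) = x)}"

definition fourier_coeff :: "nat \<Rightarrow> (int \<Rightarrow> 'a::complex_vector \<Rightarrow> 'a) \<Rightarrow> nat \<Rightarrow> 'a \<Rightarrow> 'a" where
  "fourier_coeff T A k = (\<lambda>v. (1 / of_nat T) *\<^sub>C
      (\<Sum>t<T. cis (- 2 * pi * real t * real k / real T) *\<^sub>C A (int t) v))"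

definition toeplitz :: "nat \<Rightarrow> (int \<Rightarrow> 'a::complex_vector \<Rightarrow> 'a) \<Rightarrow> (nat \<Rightarrow> 'a) \<Rightarrow> (nat \<Rightarrow> 'a)" where
  "toeplitz T A x = (\<lambda>r. if r < T then
      (\<Sum>l<T. fourier_coeff T A (nat ((int r - int l) mod int T)) (x l)) else 0)"

end

theory Submission
  imports Defs
begin

(*
  N_T is unitary, so 0 lies in the harmonic resolvent set; and bounded invertibility of
  N_T - z0 A survives perturbations of norm below 1 / ||(N_T - z0 A)^-1|| (the inverse is
  produced by Banach's fixed point theorem in the complete space X^T), so the set is open.
  If A is a Toeplitz transform, i.e. block circulant, the cyclic shift
  (R x)_k = x_((k + m) mod T) commutes with A while R N_T = eps^m N_T R.  Hence
  R (N_T - eps^m z A) = eps^m (N_T - z A) R, so eps^m z in rho_T(A) implies z in rho_T(A),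
  and eps^T = 1 turns this into eps rho_T(A) = rho_T(A).
*)

global_interpretation scaleC: vector_space "scaleC :: complex \<Rightarrow> 'a \<Rightarrow> 'a::complex_vector"
  by unfold_locales (simp_all add: scaleC_add_right scaleC_add_left scaleC_scaleC scaleC_one)

section \<open>The space X^T\<close>

lemma zero_XT [simp]: "(\<lambda>k. 0) \<in> XT T"
  by (simp add: XT_def)

lemma XT_norm_nonneg [simp]: "0 \<le> XT_norm T x"
  by (simp add: XT_norm_def sum_nonneg)

lemma XT_norm_eq_L2_set: "XT_norm T x = L2_set (\<lambda>k. norm (x k)) {..<T}"
  by (simp add: XT_norm_def L2_set_def)

lemma XT_norm_zero [simp]: "XT_norm T (\<lambda>k. 0) = 0"
  by (simp add: XT_norm_def)

lemma norm_le_XT_norm: "k < T \<Longrightarrow> norm (x k) \<le> XT_norm T x"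
  unfolding XT_norm_eq_L2_set by (rule member_le_L2_set) auto

lemma XT_norm_le_sum: "XT_norm T x \<le> (\<Sum>k<T. norm (x k))"
  unfolding XT_norm_eq_L2_set by (rule L2_set_le_sum) simp

lemma XT_norm_add_le: "XT_norm T (\<lambda>k. x k + y k) \<le> XT_norm T x + XT_norm T y"
proof -
  have "XT_norm T (\<lambda>k. x k + y k) \<le> L2_set (\<lambda>k. norm (x k) + norm (y k)) {..<T}"
    unfolding XT_norm_eq_L2_set by (rule L2_set_mono) (auto simp: norm_triangle_ineq)
  also have "\<dots> \<le> XT_norm T x + XT_norm T y"
    unfolding XT_norm_eq_L2_set by (rule L2_set_triangle_ineq)
  finally show ?thesis .
qed

lemma XT_norm_diff_le: "XT_norm T (\<lambda>k. x k - y k) \<le> XT_norm T x + XT_norm T y"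
  using XT_norm_add_le[of T x "\<lambda>k. - y k"] by (simp add: XT_norm_def)

lemma XT_norm_minus_commute: "XT_norm T (\<lambda>k. x k - y k) = XT_norm T (\<lambda>k. y k - x k)"
  by (simp add: XT_norm_def norm_minus_commute)

lemma XT_norm_scaleC:
  fixes x :: "nat \<Rightarrow> 'a::complex_normed_vector"
  shows "XT_norm T (\<lambda>k. c *\<^sub>C x k) = cmod c * XT_norm T x"
  by (simp add: XT_norm_eq_L2_set norm_scaleC L2_set_right_distrib)

lemma XT_norm_eq_0_iff:
  assumes "x \<in> XT T"
  shows "XT_norm T x = 0 \<longleftrightarrow> x = (\<lambda>k. 0)"
proof -
  have "XT_norm T x = 0 \<longleftrightarrow> (\<forall>k<T. x k = 0)"
    unfolding XT_norm_eq_L2_set by (subst L2_set_eq_0_iff) auto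
  with assms show ?thesis
    by (auto simp: XT_def fun_eq_iff) (metis not_le)
qed

definition XT_dist :: "nat \<Rightarrow> (nat \<Rightarrow> 'a::real_normed_vector) \<Rightarrow> (nat \<Rightarrow> 'a) \<Rightarrow> real" where
  "XT_dist T x y = XT_norm T (\<lambda>k. x k - y k)"

lemma Metric_space_XT: "Metric_space (XT T) (XT_dist T)"
proof
  fix x y z :: "nat \<Rightarrow> 'a"
  show "0 \<le> XT_dist T x y"
    by (simp add: XT_dist_def)
  show "XT_dist T x y = XT_dist T y x"
    unfolding XT_dist_def by (rule XT_norm_minus_commute)
  assume x: "x \<in> XT T" and y: "y \<in> XT T"
  then show "XT_dist T x y = 0 \<longleftrightarrow> x = y"
    unfolding XT_dist_def by (subst XT_norm_eq_0_iff) (auto simp: XT_def fun_eq_iff)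
  have "XT_dist T x z = XT_norm T (\<lambda>k. (x k - y k) + (y k - z k))"
    by (simp add: XT_dist_def)
  also have "\<dots> \<le> XT_dist T x y + XT_dist T y z"
    unfolding XT_dist_def by (rule XT_norm_add_le)
  finally show "XT_dist T x z \<le> XT_dist T x y + XT_dist T y z" .
qed

lemma mcomplete_XT: "Metric_space.mcomplete (XT T) (XT_dist T :: (nat \<Rightarrow> 'a::{real_normed_vector,complete_space}) \<Rightarrow> _)"
proof -
  interpret XT: Metric_space "XT T" "XT_dist T :: (nat \<Rightarrow> 'a) \<Rightarrow> _"
    by (rule Metric_space_XT)
  show ?thesis
    unfolding XT.mcomplete_def
  proof (intro allI impI)
    fix \<sigma> :: "nat \<Rightarrow> nat \<Rightarrow> 'a"
    assume Cauchy_\<sigma>: "XT.MCauchy \<sigma>"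
    then have \<sigma>_XT: "\<sigma> n \<in> XT T" for n
      by (auto simp: XT.MCauchy_def)
    have "Cauchy (\<lambda>n. \<sigma> n k)" for k
    proof (rule metric_CauchyI)
      fix e :: real assume "e > 0"
      then obtain N where N: "\<And>m n. N \<le> m \<Longrightarrow> N \<le> n \<Longrightarrow> XT_dist T (\<sigma> m) (\<sigma> n) < e"
        using Cauchy_\<sigma> unfolding XT.MCauchy_def by meson
      have "dist (\<sigma> m k) (\<sigma> n k) < e" if "N \<le> m" "N \<le> n" for m n
      proof (cases "k < T")
        case True
        then have "dist (\<sigma> m k) (\<sigma> n k) \<le> XT_dist T (\<sigma> m) (\<sigma> n)"
          unfolding XT_dist_def dist_norm by (rule norm_le_XT_norm[where x = "\<lambda>k. \<sigma> m k - \<sigma> n k"])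
        then show ?thesis
          using N[OF that] by linarith
      qed (use \<sigma>_XT \<open>e > 0\<close> in \<open>simp add: XT_def\<close>)
      then show "\<exists>N. \<forall>m\<ge>N. \<forall>n\<ge>N. dist (\<sigma> m k) (\<sigma> n k) < e"
        by blast
    qed
    then have lim: "(\<lambda>n. \<sigma> n k) \<longlonglongrightarrow> lim (\<lambda>n. \<sigma> n k)" for k
      by (simp add: Cauchy_convergent_iff convergent_LIMSEQ_iff)
    define y where "y k = (if k < T then lim (\<lambda>n. \<sigma> n k) else 0)" for k
    have y_XT: "y \<in> XT T"
      by (simp add: y_def XT_def)
    have "(\<lambda>n. \<sigma> n k - y k) \<longlonglongrightarrow> 0" for k
      using lim[of k] \<sigma>_XT by (cases "k < T") (simp_all add: y_def XT_def LIM_zero)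
    then have "(\<lambda>n. \<Sum>k<T. norm (\<sigma> n k - y k)) \<longlonglongrightarrow> 0"
      by (intro tendsto_null_sum tendsto_norm_zero)
    then have "(\<lambda>n. XT_dist T (\<sigma> n) y) \<longlonglongrightarrow> 0"
      by (rule Lim_null_comparison[rotated]) (simp add: XT_dist_def XT_norm_le_sum)
    then show "\<exists>x. limitin XT.mtopology \<sigma> x sequentially"
      using y_XT \<sigma>_XT by (auto simp: XT.limitin_metric_dist_null)
  qed
qed

section \<open>Bounded and invertible operators on X^T\<close>

lemma bounded_op_XT_XT: "bounded_op_XT T A \<Longrightarrow> x \<in> XT T \<Longrightarrow> A x \<in> XT T"
  by (simp add: bounded_op_XT_def)

lemma bounded_op_XT_add:
  "bounded_op_XT T A \<Longrightarrow> x \<in> XT T \<Longrightarrow> y \<in> XT T \<Longrightarrow> A (\<lambda>k. x k + y k) = (\<lambda>k. A x k + A y k)"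
  by (simp add: bounded_op_XT_def)

lemma bounded_op_XT_scaleC:
  "bounded_op_XT T A \<Longrightarrow> x \<in> XT T \<Longrightarrow> A (\<lambda>k. c *\<^sub>C x k) = (\<lambda>k. c *\<^sub>C A x k)"
  by (simp add: bounded_op_XT_def)

lemma bounded_op_XT_diff:
  assumes A: "bounded_op_XT T A" and x: "x \<in> XT T" and y: "y \<in> XT T"
  shows "A (\<lambda>k. x k - y k) = (\<lambda>k. A x k - A y k)"
proof -
  have "(\<lambda>k. (-1) *\<^sub>C y k) \<in> XT T"
    using y by (simp add: XT_def)
  then have "A (\<lambda>k. x k + (-1) *\<^sub>C y k) = (\<lambda>k. A x k + A (\<lambda>k. (-1) *\<^sub>C y k) k)"
    by (rule bounded_op_XT_add[OF A x])
  also have "A (\<lambda>k. (-1) *\<^sub>C y k) = (\<lambda>k. (-1) *\<^sub>C A y k)"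
    by (rule bounded_op_XT_scaleC[OF A y])
  finally show ?thesis
    by (simp add: scaleC_one)
qed

lemma bounded_op_XT_bound:
  assumes "bounded_op_XT T A"
  obtains C where "C > 0" "\<And>x. x \<in> XT T \<Longrightarrow> XT_norm T (A x) \<le> C * XT_norm T x"
proof -
  obtain C where C: "\<forall>x\<in>XT T. XT_norm T (A x) \<le> C * XT_norm T x"
    using assms by (auto simp: bounded_op_XT_def)
  have "XT_norm T (A x) \<le> max C 1 * XT_norm T x" if "x \<in> XT T" for x
    using C that mult_right_mono[OF max.cobounded1 XT_norm_nonneg] by (meson order_trans)
  then show ?thesis
    using that[of "max C 1"] by simp
qed

lemma bounded_op_XT_comp:
  assumes A: "bounded_op_XT T A" and B: "bounded_op_XT T B"
  shows "bounded_op_XT T (\<lambda>x. A (B x))"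
proof -
  obtain Ca where Ca: "Ca > 0" "\<And>x. x \<in> XT T \<Longrightarrow> XT_norm T (A x) \<le> Ca * XT_norm T x"
    using bounded_op_XT_bound[OF A] by blast
  obtain Cb where Cb: "\<And>x. x \<in> XT T \<Longrightarrow> XT_norm T (B x) \<le> Cb * XT_norm T x"
    using bounded_op_XT_bound[OF B] by blast
  have "XT_norm T (A (B x)) \<le> (Ca * Cb) * XT_norm T x" if x: "x \<in> XT T" for x
  proof -
    have "XT_norm T (A (B x)) \<le> Ca * XT_norm T (B x)"
      by (rule Ca(2)[OF bounded_op_XT_XT[OF B x]])
    also have "\<dots> \<le> Ca * (Cb * XT_norm T x)"
      using Ca(1) Cb[OF x] by simp
    finally show ?thesis
      by (simp add: mult.assoc)
  qed
  then show ?thesis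
    using A B by (auto simp: bounded_op_XT_def)
qed

lemma bounded_op_XT_diff_op:
  assumes A: "bounded_op_XT T A" and B: "bounded_op_XT T B"
  shows "bounded_op_XT T (\<lambda>x k. A x k - B x k)"
proof -
  obtain Ca where Ca: "\<And>x. x \<in> XT T \<Longrightarrow> XT_norm T (A x) \<le> Ca * XT_norm T x"
    using bounded_op_XT_bound[OF A] by blast
  obtain Cb where Cb: "\<And>x. x \<in> XT T \<Longrightarrow> XT_norm T (B x) \<le> Cb * XT_norm T x"
    using bounded_op_XT_bound[OF B] by blast
  show ?thesis
    unfolding bounded_op_XT_def
  proof (intro conjI ballI allI exI)
    fix x y :: "nat \<Rightarrow> 'a" assume x: "x \<in> XT T" and y: "y \<in> XT T"
    show "(\<lambda>k. A x k - B x k) \<in> XT T"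
      using bounded_op_XT_XT[OF A x] bounded_op_XT_XT[OF B x] by (simp add: XT_def)
    show "(\<lambda>k. A (\<lambda>k. x k + y k) k - B (\<lambda>k. x k + y k) k) = (\<lambda>k. (A x k - B x k) + (A y k - B y k))"
      using x y by (simp add: bounded_op_XT_add[OF A] bounded_op_XT_add[OF B] fun_eq_iff)
    show "(\<lambda>k. A (\<lambda>k. c *\<^sub>C x k) k - B (\<lambda>k. c *\<^sub>C x k) k) = (\<lambda>k. c *\<^sub>C (A x k - B x k))" for c
      using x by (simp add: bounded_op_XT_scaleC[OF A] bounded_op_XT_scaleC[OF B]
          scaleC.scale_right_diff_distrib)
    show "XT_norm T (\<lambda>k. A x k - B x k) \<le> (Ca + Cb) * XT_norm T x"
      using XT_norm_diff_le[of T "A x" "B x"] Ca[OF x] Cb[OF x] by (simp add: algebra_simps)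
  qed
qed

lemma bounded_op_XT_scaleC_op:
  fixes A :: "(nat \<Rightarrow> 'a::complex_normed_vector) \<Rightarrow> nat \<Rightarrow> 'a"
  assumes A: "bounded_op_XT T A"
  shows "bounded_op_XT T (\<lambda>x k. c *\<^sub>C A x k)"
proof -
  obtain C where C: "\<And>x. x \<in> XT T \<Longrightarrow> XT_norm T (A x) \<le> C * XT_norm T x"
    using bounded_op_XT_bound[OF A] by blast
  show ?thesis
    unfolding bounded_op_XT_def
  proof (intro conjI ballI allI exI)
    fix x y :: "nat \<Rightarrow> 'a" assume x: "x \<in> XT T" and y: "y \<in> XT T"
    show "(\<lambda>k. c *\<^sub>C A x k) \<in> XT T"
      using bounded_op_XT_XT[OF A x] by (simp add: XT_def)
    show "(\<lambda>k. c *\<^sub>C A (\<lambda>k. x k + y k) k) = (\<lambda>k. c *\<^sub>C A x k + c *\<^sub>C A y k)"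
      using x y by (simp add: bounded_op_XT_add[OF A] scaleC_add_right)
    show "(\<lambda>k. c *\<^sub>C A (\<lambda>k. d *\<^sub>C x k) k) = (\<lambda>k. d *\<^sub>C (c *\<^sub>C A x k))" for d
      using x by (simp add: bounded_op_XT_scaleC[OF A] scaleC_scaleC mult.commute)
    show "XT_norm T (\<lambda>k. c *\<^sub>C A x k) \<le> (cmod c * C) * XT_norm T x"
      using C[OF x] by (simp add: XT_norm_scaleC mult.assoc mult_left_mono)
  qed
qed

definition invertible_op_XT :: "nat \<Rightarrow> ((nat \<Rightarrow> 'a::complex_normed_vector) \<Rightarrow> nat \<Rightarrow> 'a) \<Rightarrow> bool" where
  "invertible_op_XT T L \<longleftrightarrow>
     (\<exists>B. bounded_op_XT T B \<and> (\<forall>x\<in>XT T. B (L x) = x) \<and> (\<forall>x\<in>XT T. L (B x) = x))"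

lemma invertible_op_XT_cong:
  assumes "invertible_op_XT T L" and "\<And>x. x \<in> XT T \<Longrightarrow> L' x = L x"
  shows "invertible_op_XT T L'"
  using assms by (auto simp: invertible_op_XT_def bounded_op_XT_XT)

lemma invertible_op_XT_comp:
  assumes L: "invertible_op_XT T L" and M: "invertible_op_XT T M"
    and M_XT: "\<And>x. x \<in> XT T \<Longrightarrow> M x \<in> XT T"
  shows "invertible_op_XT T (\<lambda>x. L (M x))"
proof -
  obtain A where A: "bounded_op_XT T A" "\<forall>x\<in>XT T. A (L x) = x" "\<forall>x\<in>XT T. L (A x) = x"
    using L by (auto simp: invertible_op_XT_def)
  obtain B where B: "bounded_op_XT T B" "\<forall>x\<in>XT T. B (M x) = x" "\<forall>x\<in>XT T. M (B x) = x"
    using M by (auto simp: invertible_op_XT_def)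
  show ?thesis
    unfolding invertible_op_XT_def
    using A B M_XT bounded_op_XT_XT[OF A(1)] by (intro exI[of _ "\<lambda>x. B (A x)"]) (simp add: bounded_op_XT_comp)
qed

lemma invertible_op_XT_if_onto_bounded_below:
  assumes L: "bounded_op_XT T L"
    and onto: "\<And>x. x \<in> XT T \<Longrightarrow> \<exists>y\<in>XT T. L y = x"
    and below: "\<And>y. y \<in> XT T \<Longrightarrow> XT_norm T y \<le> C * XT_norm T (L y)"
  shows "invertible_op_XT T L"
proof -
  have inj: "y = y'" if "y \<in> XT T" "y' \<in> XT T" "L y = L y'" for y y'
  proof -
    have "(\<lambda>k. y k - y' k) \<in> XT T"
      using that by (simp add: XT_def)
    moreover have "L (\<lambda>k. y k - y' k) = (\<lambda>k. 0)"
      using that by (simp add: bounded_op_XT_diff[OF L])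
    ultimately have "XT_norm T (\<lambda>k. y k - y' k) = 0"
      using below XT_norm_nonneg by (metis XT_norm_zero mult_zero_right order_antisym)
    then show ?thesis
      using that by (subst (asm) XT_norm_eq_0_iff) (auto simp: XT_def fun_eq_iff)
  qed
  define B where "B x = (THE y. y \<in> XT T \<and> L y = x)" for x
  have B: "B x \<in> XT T" "L (B x) = x" if "x \<in> XT T" for x
    using theI'[of "\<lambda>y. y \<in> XT T \<and> L y = x"] onto[OF that] inj unfolding B_def by blast+
  have B_eqI: "B x = y" if "y \<in> XT T" "L y = x" for x y
    using B[of x] inj that bounded_op_XT_XT[OF L] by metis
  have "bounded_op_XT T B"
    unfolding bounded_op_XT_def
  proof (intro conjI ballI allI exI[of _ C])
    fix x y :: "nat \<Rightarrow> 'a" assume x: "x \<in> XT T" and y: "y \<in> XT T"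
    show "B x \<in> XT T"
      using B x by blast
    show "B (\<lambda>k. x k + y k) = (\<lambda>k. B x k + B y k)"
      using B x y by (intro B_eqI) (auto simp: XT_def bounded_op_XT_add[OF L])
    show "B (\<lambda>k. c *\<^sub>C x k) = (\<lambda>k. c *\<^sub>C B x k)" for c
      using B x by (intro B_eqI) (auto simp: XT_def bounded_op_XT_scaleC[OF L])
    show "XT_norm T (B x) \<le> C * XT_norm T x"
      using below B x by metis
  qed
  then show ?thesis
    unfolding invertible_op_XT_def using B B_eqI bounded_op_XT_XT[OF L] by blast
qed

text \<open>The preimage of \<open>x\<close> is the fixed point of the contraction \<open>y \<mapsto> B (x + P y)\<close>.\<close>

lemma perturbed_op_XT_onto:
  fixes L P B :: "(nat \<Rightarrow> 'a::{complex_normed_vector,complete_space}) \<Rightarrow> nat \<Rightarrow> 'a"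
  assumes P: "bounded_op_XT T P" and B: "bounded_op_XT T B" and LB: "\<forall>x\<in>XT T. L (B x) = x"
    and B_bound: "\<And>x. x \<in> XT T \<Longrightarrow> XT_norm T (B x) \<le> Cb * XT_norm T x"
    and P_bound: "\<And>x. x \<in> XT T \<Longrightarrow> XT_norm T (P x) \<le> Cp * XT_norm T x"
    and Cb: "0 \<le> Cb" and small: "Cb * Cp < 1"
    and x: "x \<in> XT T"
  shows "\<exists>y\<in>XT T. (\<lambda>k. L y k - P y k) = x"
proof -
  define \<Phi> where "\<Phi> y = B (\<lambda>k. x k + P y k)" for y
  have shifted_XT: "(\<lambda>k. x k + P y k) \<in> XT T" if "y \<in> XT T" for y
    using x bounded_op_XT_XT[OF P that] by (simp add: XT_def)
  have \<Phi>_XT: "\<Phi> \<in> XT T \<rightarrow> XT T"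
    using shifted_XT bounded_op_XT_XT[OF B] by (simp add: \<Phi>_def)
  have contraction: "XT_dist T (\<Phi> y) (\<Phi> y') \<le> (Cb * Cp) * XT_dist T y y'"
    if y: "y \<in> XT T" and y': "y' \<in> XT T" for y y'
  proof -
    have diff_XT: "(\<lambda>k. y k - y' k) \<in> XT T"
      using y y' by (simp add: XT_def)
    have "(\<lambda>k. \<Phi> y k - \<Phi> y' k) = B (\<lambda>k. P y k - P y' k)"
      using bounded_op_XT_diff[OF B shifted_XT[OF y] shifted_XT[OF y']] by (simp add: \<Phi>_def)
    also have "\<dots> = B (P (\<lambda>k. y k - y' k))"
      by (simp add: bounded_op_XT_diff[OF P y y'])
    finally have "XT_dist T (\<Phi> y) (\<Phi> y') = XT_norm T (B (P (\<lambda>k. y k - y' k)))"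
      by (simp add: XT_dist_def)
    also have "\<dots> \<le> Cb * XT_norm T (P (\<lambda>k. y k - y' k))"
      by (rule B_bound[OF bounded_op_XT_XT[OF P diff_XT]])
    also have "\<dots> \<le> Cb * (Cp * XT_dist T y y')"
      using P_bound[OF diff_XT] Cb by (simp add: XT_dist_def mult_left_mono)
    finally show ?thesis
      by (simp add: mult.assoc)
  qed
  interpret XT: Metric_space "XT T" "XT_dist T :: (nat \<Rightarrow> 'a) \<Rightarrow> _"
    by (rule Metric_space_XT)
  obtain y where y: "y \<in> XT T" "\<Phi> y = y"
    using XT.Banach_fixedpoint_thm[OF mcomplete_XT _ \<Phi>_XT small contraction] zero_XT by blast
  then have "L y = (\<lambda>k. x k + P y k)"
    using LB shifted_XT[OF y(1)] by (metis \<Phi>_def)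
  then show ?thesis
    using y(1) by (intro bexI[of _ y]) (simp_all add: fun_eq_iff)
qed

lemma invertible_op_XT_perturb:
  fixes L P B :: "(nat \<Rightarrow> 'a::{complex_normed_vector,complete_space}) \<Rightarrow> nat \<Rightarrow> 'a"
  assumes L: "bounded_op_XT T L" and P: "bounded_op_XT T P" and B: "bounded_op_XT T B"
    and BL: "\<forall>x\<in>XT T. B (L x) = x" and LB: "\<forall>x\<in>XT T. L (B x) = x"
    and B_bound: "\<And>x. x \<in> XT T \<Longrightarrow> XT_norm T (B x) \<le> Cb * XT_norm T x"
    and P_bound: "\<And>x. x \<in> XT T \<Longrightarrow> XT_norm T (P x) \<le> Cp * XT_norm T x"
    and Cb: "0 \<le> Cb" and small: "Cb * Cp < 1"
  shows "invertible_op_XT T (\<lambda>x k. L x k - P x k)"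
proof (rule invertible_op_XT_if_onto_bounded_below[where C = "Cb / (1 - Cb * Cp)"])
  show "bounded_op_XT T (\<lambda>x k. L x k - P x k)"
    by (rule bounded_op_XT_diff_op[OF L P])
  show "\<exists>y\<in>XT T. (\<lambda>k. L y k - P y k) = x" if "x \<in> XT T" for x
    by (rule perturbed_op_XT_onto[OF P B LB B_bound P_bound Cb small that])
next
  fix y :: "nat \<Rightarrow> 'a" assume y: "y \<in> XT T"
  define x where "x = (\<lambda>k. L y k - P y k)"
  have "XT_norm T y = XT_norm T (B (\<lambda>k. x k + P y k))"
    using BL y by (simp add: x_def)
  also have "\<dots> \<le> Cb * XT_norm T (\<lambda>k. x k + P y k)"
    using y bounded_op_XT_XT[OF L y] bounded_op_XT_XT[OF P y]
    by (intro B_bound) (simp add: x_def XT_def)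
  also have "\<dots> \<le> Cb * (XT_norm T x + Cp * XT_norm T y)"
    using XT_norm_add_le[of T x "P y"] P_bound[OF y] Cb
    by (intro mult_left_mono) simp_all
  finally have "(1 - Cb * Cp) * XT_norm T y \<le> Cb * XT_norm T x"
    by (simp add: algebra_simps)
  with small show "XT_norm T y \<le> Cb / (1 - Cb * Cp) * XT_norm T (\<lambda>k. L y k - P y k)"
    by (simp add: x_def pos_le_divide_eq mult.commute)
qed

definition diag_op :: "nat \<Rightarrow> (nat \<Rightarrow> complex) \<Rightarrow> (nat \<Rightarrow> 'a::complex_vector) \<Rightarrow> nat \<Rightarrow> 'a" where
  "diag_op T d x = (\<lambda>k. if k < T then d k *\<^sub>C x k else 0)"

lemma bounded_op_XT_diag_op: "bounded_op_XT T (diag_op T d :: (nat \<Rightarrow> 'a::complex_normed_vector) \<Rightarrow> _)"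
proof -
  define C where "C = (\<Sum>k<T. cmod (d k))"
  have "XT_norm T (diag_op T d x) \<le> C * XT_norm T x" for x :: "nat \<Rightarrow> 'a"
  proof -
    have "XT_norm T (diag_op T d x) \<le> L2_set (\<lambda>k. C * norm (x k)) {..<T}"
      unfolding XT_norm_eq_L2_set diag_op_def
      by (rule L2_set_mono) (auto simp: norm_scaleC C_def intro!: mult_right_mono member_le_sum)
    also have "\<dots> = C * XT_norm T x"
      by (simp add: XT_norm_eq_L2_set L2_set_right_distrib C_def sum_nonneg)
    finally show ?thesis .
  qed
  then show ?thesis
    by (auto simp: bounded_op_XT_def diag_op_def XT_def fun_eq_iff scaleC_add_right scaleC_scaleC
        mult.commute)
qed

lemma invertible_op_XT_diag_op:
  assumes "\<And>k. k < T \<Longrightarrow> d k \<noteq> 0"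
  shows "invertible_op_XT T (diag_op T d :: (nat \<Rightarrow> 'a::complex_normed_vector) \<Rightarrow> _)"
  unfolding invertible_op_XT_def
  using assms
  by (intro exI[of _ "diag_op T (\<lambda>k. inverse (d k))"])
     (auto simp: bounded_op_XT_diag_op diag_op_def XT_def fun_eq_iff scaleC_scaleC scaleC_one)

section \<open>The harmonic resolvent set\<close>

definition harmonic_op ::
    "nat \<Rightarrow> ((nat \<Rightarrow> 'a::complex_normed_vector) \<Rightarrow> nat \<Rightarrow> 'a) \<Rightarrow> complex \<Rightarrow> (nat \<Rightarrow> 'a) \<Rightarrow> nat \<Rightarrow> 'a" where
  "harmonic_op T A z x = (\<lambda>k. N_op T x k - z *\<^sub>C A x k)"

lemma harmonic_resolvent_eq: "harmonic_resolvent T A = {z. invertible_op_XT T (harmonic_op T A z)}"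
  by (simp add: harmonic_resolvent_def invertible_op_XT_def harmonic_op_def)

lemma eps_nonzero: "eps T \<noteq> 0"
  by (simp add: eps_def)

lemma N_op_eq_diag_op: "N_op T = diag_op T (\<lambda>k. eps T ^ k)"
  by (simp add: fun_eq_iff N_op_def diag_op_def)

lemma bounded_op_XT_harmonic_op:
  "bounded_op_XT T A \<Longrightarrow> bounded_op_XT T (harmonic_op T A z)"
  unfolding harmonic_op_def[abs_def] N_op_eq_diag_op
  by (intro bounded_op_XT_diff_op bounded_op_XT_diag_op bounded_op_XT_scaleC_op)

lemma zero_in_harmonic_resolvent: "0 \<in> harmonic_resolvent T A"
proof -
  have "harmonic_op T A 0 = diag_op T (\<lambda>k. eps T ^ k)"
    by (simp add: fun_eq_iff harmonic_op_def N_op_eq_diag_op)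
  then show ?thesis
    by (simp add: harmonic_resolvent_eq invertible_op_XT_diag_op eps_nonzero)
qed

lemma harmonic_resolvent_ball:
  fixes A :: "(nat \<Rightarrow> 'a::{complex_normed_vector,complete_space}) \<Rightarrow> nat \<Rightarrow> 'a"
  assumes A: "bounded_op_XT T A" and z0: "z0 \<in> harmonic_resolvent T A"
  shows "\<exists>r>0. ball z0 r \<subseteq> harmonic_resolvent T A"
proof -
  obtain B where B: "bounded_op_XT T B"
      "\<forall>x\<in>XT T. B (harmonic_op T A z0 x) = x" "\<forall>x\<in>XT T. harmonic_op T A z0 (B x) = x"
    using z0 by (auto simp: harmonic_resolvent_eq invertible_op_XT_def)
  obtain Ca where Ca: "Ca > 0" "\<And>x. x \<in> XT T \<Longrightarrow> XT_norm T (A x) \<le> Ca * XT_norm T x"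
    using bounded_op_XT_bound[OF A] by blast
  obtain Cb where Cb: "Cb > 0" "\<And>x. x \<in> XT T \<Longrightarrow> XT_norm T (B x) \<le> Cb * XT_norm T x"
    using bounded_op_XT_bound[OF B(1)] by blast
  have "ball z0 (1 / (Ca * Cb)) \<subseteq> harmonic_resolvent T A"
  proof
    fix z assume "z \<in> ball z0 (1 / (Ca * Cb))"
    then have small: "Cb * (cmod (z - z0) * Ca) < 1"
      using Ca(1) Cb(1) by (simp add: dist_norm norm_minus_commute field_simps)
    have A_bound: "XT_norm T (\<lambda>k. (z - z0) *\<^sub>C A x k) \<le> cmod (z - z0) * Ca * XT_norm T x" if "x \<in> XT T" for x
      using Ca(2)[OF that] by (simp add: XT_norm_scaleC mult.assoc mult_left_mono)
    have "invertible_op_XT T (\<lambda>x k. harmonic_op T A z0 x k - (z - z0) *\<^sub>C A x k)"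
      using Cb(1) small A_bound
      by (intro invertible_op_XT_perturb[OF bounded_op_XT_harmonic_op[OF A]
            bounded_op_XT_scaleC_op[OF A] B Cb(2)]) simp_all
    moreover have "(\<lambda>x k. harmonic_op T A z0 x k - (z - z0) *\<^sub>C A x k) = harmonic_op T A z"
      by (simp add: fun_eq_iff harmonic_op_def scaleC.scale_left_diff_distrib)
    ultimately show "z \<in> harmonic_resolvent T A"
      by (simp add: harmonic_resolvent_eq)
  qed
  then show ?thesis
    using Ca(1) Cb(1) by (intro exI[of _ "1 / (Ca * Cb)"]) simp
qed

section \<open>Cyclic rotation\<close>

lemma dvd_add_mod_complement:
  fixes m T :: nat
  assumes "T > 0"
  shows "T dvd m + (T - m mod T)"
proof -
  have "m + (T - m mod T) = T * (m div T) + T"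
    using mod_less_divisor[OF assms, of m] minus_mod_eq_mult_div[of m T] mod_less_eq_dividend[of m T]
    by linarith
  then show ?thesis
    by simp
qed

lemma bij_betw_add_mod: "bij_betw (\<lambda>k. (k + m) mod T) {..<T} {..<T::nat}"
proof (cases "T = 0")
  case False
  define m' where "m' = T - m mod T"
  have cancel: "(k + (m + m')) mod T = k" "(k + (m' + m)) mod T = k" if "k < T" for k
    using dvd_add_mod_complement[of T m] False that by (auto simp: m'_def add.commute elim!: dvdE)
  show ?thesis
    by (rule bij_betw_byWitness[where f' = "\<lambda>k. (k + m') mod T"])
       (use False cancel in \<open>auto simp: mod_add_left_eq add.assoc\<close>)
qed (simp add: bij_betw_def)

lemma sum_add_mod:
  fixes m T :: nat
  shows "(\<Sum>k<T. f ((k + m) mod T)) = (\<Sum>k<T. f k)"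
  by (rule sum.reindex_bij_betw[OF bij_betw_add_mod])

definition rotate_op :: "nat \<Rightarrow> nat \<Rightarrow> (nat \<Rightarrow> 'a::zero) \<Rightarrow> nat \<Rightarrow> 'a" where
  "rotate_op T m x = (\<lambda>k. if k < T then x ((k + m) mod T) else 0)"

lemma rotate_op_XT [simp]: "rotate_op T m x \<in> XT T"
  by (simp add: rotate_op_def XT_def)

lemma rotate_op_rotate_op: "rotate_op T m (rotate_op T n x) = rotate_op T (m + n) x"
  by (simp add: rotate_op_def fun_eq_iff mod_add_left_eq add.assoc)

lemma rotate_op_dvd:
  assumes "T dvd n" and "x \<in> XT T"
  shows "rotate_op T n x = x"
  using assms by (auto simp: rotate_op_def fun_eq_iff XT_def)

lemma XT_norm_rotate_op: "XT_norm T (rotate_op T m x) = XT_norm T x"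
  using sum_add_mod[where f = "\<lambda>k. (norm (x k))\<^sup>2"] by (simp add: XT_norm_def rotate_op_def)

lemma bounded_op_XT_rotate_op: "bounded_op_XT T (rotate_op T m :: (nat \<Rightarrow> 'a::complex_normed_vector) \<Rightarrow> _)"
  by (auto simp: bounded_op_XT_def rotate_op_def XT_def fun_eq_iff XT_norm_rotate_op[unfolded rotate_op_def]
      intro!: exI[of _ 1])

lemma invertible_op_XT_rotate_op:
  assumes "T > 0"
  shows "invertible_op_XT T (rotate_op T m :: (nat \<Rightarrow> 'a::complex_normed_vector) \<Rightarrow> _)"
proof -
  have "T dvd m + (T - m mod T)" "T dvd (T - m mod T) + m"
    using dvd_add_mod_complement[OF assms, of m] by (simp_all add: add.commute)
  then show ?thesis
    unfolding invertible_op_XT_def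
    by (intro exI[of _ "rotate_op T (T - m mod T)"])
       (simp add: bounded_op_XT_rotate_op rotate_op_rotate_op rotate_op_dvd)
qed

lemma toeplitz_rotate_op: "toeplitz T A (rotate_op T m x) = rotate_op T m (toeplitz T A x)"
proof
  fix r
  show "toeplitz T A (rotate_op T m x) r = rotate_op T m (toeplitz T A x) r"
  proof (cases "r < T")
    case True
    let ?F = "\<lambda>i. fourier_coeff T A (nat (i mod int T))"
    have "rotate_op T m (toeplitz T A x) r = (\<Sum>l<T. ?F (int ((r + m) mod T) - int l) (x l))"
      using True by (simp add: rotate_op_def toeplitz_def)
    also have "\<dots> = (\<Sum>l<T. ?F (int ((r + m) mod T) - int ((l + m) mod T)) (x ((l + m) mod T)))"
      by (rule sum_add_mod[symmetric])
    also have "\<dots> = (\<Sum>l<T. ?F (int r - int l) (x ((l + m) mod T)))"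
      by (simp add: zmod_int mod_diff_eq)
    also have "\<dots> = toeplitz T A (rotate_op T m x) r"
      using True by (simp add: rotate_op_def toeplitz_def)
    finally show ?thesis ..
  qed (simp add: rotate_op_def toeplitz_def)
qed

lemma eps_pow_mod: "eps T ^ (n mod T) = eps T ^ n"
proof (cases "T = 0")
  case False
  have "eps T ^ n = eps T ^ (T * (n div T) + n mod T)"
    by (simp add: mult.commute)
  also have "\<dots> = (eps T ^ T) ^ (n div T) * eps T ^ (n mod T)"
    by (simp only: power_add power_mult)
  also have "eps T ^ T = 1"
    using False by (simp add: eps_def Complex.DeMoivre)
  finally show ?thesis
    by simp
qed simp

lemma rotate_op_N_op:
  "rotate_op T m (N_op T x) = (\<lambda>k. eps T ^ m *\<^sub>C N_op T (rotate_op T m x) k)"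
proof
  fix k
  have "eps T ^ ((k + m) mod T) = eps T ^ m * eps T ^ k"
    by (simp add: eps_pow_mod power_add mult.commute)
  then show "rotate_op T m (N_op T x) k = eps T ^ m *\<^sub>C N_op T (rotate_op T m x) k"
    by (simp add: rotate_op_def N_op_def scaleC_scaleC)
qed

lemma harmonic_op_rotate_op:
  assumes toeplitz: "\<forall>x\<in>XT T. A x = toeplitz T At x" and x: "x \<in> XT T"
  shows "rotate_op T m (harmonic_op T A (eps T ^ m * w) x)
           = (\<lambda>k. eps T ^ m *\<^sub>C harmonic_op T A w (rotate_op T m x) k)"
proof -
  have A_rotate: "rotate_op T m (A x) = A (rotate_op T m x)"
    using toeplitz x by (simp add: toeplitz_rotate_op)
  have "rotate_op T m (harmonic_op T A (eps T ^ m * w) x)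
      = (\<lambda>k. rotate_op T m (N_op T x) k - (eps T ^ m * w) *\<^sub>C rotate_op T m (A x) k)"
    by (simp add: harmonic_op_def rotate_op_def fun_eq_iff)
  also have "\<dots> = (\<lambda>k. eps T ^ m *\<^sub>C N_op T (rotate_op T m x) k
                      - (eps T ^ m * w) *\<^sub>C A (rotate_op T m x) k)"
    by (simp only: rotate_op_N_op A_rotate)
  also have "\<dots> = (\<lambda>k. eps T ^ m *\<^sub>C harmonic_op T A w (rotate_op T m x) k)"
    by (simp add: harmonic_op_def scaleC.scale_right_diff_distrib scaleC_scaleC)
  finally show ?thesis .
qed

lemma harmonic_resolvent_eps_pow_multD:
  fixes A :: "(nat \<Rightarrow> 'a::complex_normed_vector) \<Rightarrow> nat \<Rightarrow> 'a"
  assumes T: "T > 0" and A: "bounded_op_XT T A" and toeplitz: "\<forall>x\<in>XT T. A x = toeplitz T At x"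
    and "eps T ^ m * w \<in> harmonic_resolvent T A"
  shows "w \<in> harmonic_resolvent T A"
proof -
  let ?R = "rotate_op T m" and ?R' = "rotate_op T (T - m mod T)"
  let ?L = "harmonic_op T A (eps T ^ m * w)"
  let ?D = "diag_op T (\<lambda>_. inverse (eps T ^ m))"
  have L: "invertible_op_XT T ?L"
    using assms(4) by (simp add: harmonic_resolvent_eq)
  have L_XT: "?L y \<in> XT T" if "y \<in> XT T" for y
    by (rule bounded_op_XT_XT[OF bounded_op_XT_harmonic_op[OF A] that])
  have D: "invertible_op_XT T ?D"
    by (rule invertible_op_XT_diag_op) (simp add: eps_nonzero)
  have "invertible_op_XT T (\<lambda>y. ?L (?R' y))"
    by (rule invertible_op_XT_comp[OF L invertible_op_XT_rotate_op[OF T]]) simp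
  then have "invertible_op_XT T (\<lambda>y. ?R (?L (?R' y)))"
    by (rule invertible_op_XT_comp[OF invertible_op_XT_rotate_op[OF T]]) (simp add: L_XT)
  then have "invertible_op_XT T (\<lambda>y. ?D (?R (?L (?R' y))))"
    by (rule invertible_op_XT_comp[OF D]) simp
  moreover have "?D (?R (?L (?R' y))) = harmonic_op T A w y" if y: "y \<in> XT T" for y
  proof -
    have "?R (?R' y) = y"
      using y dvd_add_mod_complement[OF T, of m] by (simp add: rotate_op_rotate_op rotate_op_dvd)
    then have "?R (?L (?R' y)) = (\<lambda>k. eps T ^ m *\<^sub>C harmonic_op T A w y k)"
      using harmonic_op_rotate_op[OF toeplitz rotate_op_XT, of m w] by simp
    then show ?thesis
      using bounded_op_XT_XT[OF bounded_op_XT_harmonic_op[OF A] y] eps_nonzero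
      by (simp add: diag_op_def XT_def fun_eq_iff scaleC_scaleC scaleC_one)
  qed
  ultimately show ?thesis
    by (simp add: harmonic_resolvent_eq invertible_op_XT_cong)
qed

lemma image_mult_eps_eq:
  fixes S :: "complex set"
  assumes T: "T > 0" and closed: "\<And>m z. eps T ^ m * z \<in> S \<Longrightarrow> z \<in> S"
  shows "(\<lambda>z. eps T * z) ` S = S"
proof -
  have cancel: "eps T ^ (T - 1) * (eps T * z) = z" "eps T * (eps T ^ (T - 1) * z) = z" for z
    using T eps_pow_mod[of T T] by (simp_all flip: mult.assoc power_Suc power_Suc2)
  have "eps T * z \<in> S" if "z \<in> S" for z
    using closed[of "T - 1" "eps T * z"] that by (simp only: cancel(1))
  moreover have "z \<in> (\<lambda>z. eps T * z) ` S" if "z \<in> S" for z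
    using closed[of 1 "eps T ^ (T - 1) * z"] that cancel[of z] by (metis image_eqI power_one_right)
  ultimately show ?thesis
    by blast
qed

theorem proposition6:
  fixes T :: nat
    and \<A> :: "(nat \<Rightarrow> 'a::chilbert_space) \<Rightarrow> (nat \<Rightarrow> 'a)"
  assumes T_pos: "T > 0"
    and A_bdd: "bounded_op_XT T \<A>"
  shows "open (harmonic_resolvent T \<A>)
         \<and> (\<exists>e>0. ball 0 e \<subseteq> harmonic_resolvent T \<A>)
         \<and> harmonic_resolvent T \<A> \<noteq> {}
         \<and> (\<forall>A :: int \<Rightarrow> 'a \<Rightarrow> 'a.
               (\<forall>t. A (t + int T) = A t) \<longrightarrow> (\<forall>t. bounded_clinear (A t)) \<longrightarrow>
               (\<forall>x\<in>XT T. \<A> x = toeplitz T A x) \<longrightarrow>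
               (\<lambda>z. eps T * z) ` harmonic_resolvent T \<A> = harmonic_resolvent T \<A>)"
proof (intro conjI allI impI)
  show "open (harmonic_resolvent T \<A>)"
    unfolding open_contains_ball using harmonic_resolvent_ball[OF A_bdd] by blast
  show "\<exists>e>0. ball 0 e \<subseteq> harmonic_resolvent T \<A>"
    by (rule harmonic_resolvent_ball[OF A_bdd zero_in_harmonic_resolvent])
  show "harmonic_resolvent T \<A> \<noteq> {}"
    using zero_in_harmonic_resolvent by blast
  fix A :: "int \<Rightarrow> 'a \<Rightarrow> 'a"
  assume toeplitz: "\<forall>x\<in>XT T. \<A> x = toeplitz T A x"
  show "(\<lambda>z. eps T * z) ` harmonic_resolvent T \<A> = harmonic_resolvent T \<A>"
    by (rule image_mult_eps_eq[OF T_pos harmonic_resolvent_eps_pow_multD[OF T_pos A_bdd toeplitz]])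
qed

end
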